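(* Let $\mathcal G$ be a finite biregular graph with parameters $\delta_B,\delta_R$, and let $P_{\mathcal G}(z)$ be its closed nonbacktracking walk generating function (defined in the context, analytic near $z=0$). Then $P_{\mathcal G}(z)$ extends analytically to \[\{|z|<1/\sqrt{\delta_R\delta_B}\}\setminus\{z\in\mathbb R:\ 1/(\delta_R\delta_B)\le|z|<1/\sqrt{\delta_R\delta_B}\}\] and to \[\{|z|>1/\sqrt{\delta_R\delta_B}\}\setminus\{z\in\mathbb R:\ 1/\sqrt{\delta_R\delta_B}<|z|\le1\},\] except for poles at $z=\pm i$.
   Context: Biregular graph: connected simple bipartite graph with vertex classes $\mathcal V_R,\mathcal V_B$, every vertex of $\mathcal V_B$ of degree $\delta_B+1$ and of $\mathcal V_R$ of degree $\delta_R+1$ (integers $\delta_B,\delta_R\ge1$); edges are identified with $[0,1]$. $P_{\mathcal G}(z)=N_{\mathcal E}+\sum_{l>0}\eta_lz^{l/2}$, where $N_{\mathcal E}$ is the number of edges and $\eta_l$ is the total number of closed nonbacktracking walks of length $l$ based at edge midpoints (summed over all $N_{\mathcal E}$ midpoints as basepoints); a closed nonbacktracking walk based at a midpoint $g$ is a closed edgepath at $g$ traversed at unit speed whose lift to the universal covering tree is a nonbacktracking path; only even $l$ occur, so $P_{\mathcal G}$ is a power series in $z$. *)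

theory Defs
  imports "HOL-Complex_Analysis.Complex_Analysis"
begin

definition biregular_graph ::
  "'a set \<Rightarrow> 'a set \<Rightarrow> 'a set \<Rightarrow> ('a \<Rightarrow> 'a \<Rightarrow> bool) \<Rightarrow> nat \<Rightarrow> nat \<Rightarrow> bool" where
  "biregular_graph V VR VB E \<delta>R \<delta>B \<longleftrightarrow>
     finite V \<and> V \<noteq> {} \<and> VR \<union> VB = V \<and> VR \<inter> VB = {} \<and>
     (\<forall>u v. E u v \<longrightarrow> E v u) \<and>
     (\<forall>u v. E u v \<longrightarrow> (u \<in> VR \<and> v \<in> VB) \<or> (u \<in> VB \<and> v \<in> VR)) \<and>
     (\<forall>u\<in>V. \<forall>v\<in>V. E\<^sup>*\<^sup>* u v) \<and>
     \<delta>R \<ge> 1 \<and> \<delta>B \<ge> 1 \<and>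
     (\<forall>v\<in>VB. card {w. E v w} = \<delta>B + 1) \<and>
     (\<forall>v\<in>VR. card {w. E v w} = \<delta>R + 1)"

definition graph_edges :: "('a \<Rightarrow> 'a \<Rightarrow> bool) \<Rightarrow> 'a set set" where
  "graph_edges E = {{u, v} | u v. E u v}"

definition num_edges :: "('a \<Rightarrow> 'a \<Rightarrow> bool) \<Rightarrow> nat" where
  "num_edges E = card (graph_edges E)"

text \<open>A closed nonbacktracking walk of length l based at the midpoint of the edge
  {ys!0, ys!1}, leaving the midpoint in the direction of ys!1: it runs through the
  second half of that edge, then the full edges ys!1 - ys!2 - ... - ys!l = ys!0,
  then the first half of the base edge back to the midpoint.  Its lift to the
  universal covering tree is nonbacktracking: no immediate reversal at any vertex,
  including at the basepoint midpoint (last edge differs from base edge reversed).\<close>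
definition closed_nb_walk :: "('a \<Rightarrow> 'a \<Rightarrow> bool) \<Rightarrow> nat \<Rightarrow> 'a list \<Rightarrow> bool" where
  "closed_nb_walk E l ys \<longleftrightarrow>
     l \<ge> 1 \<and> length ys = Suc l \<and> ys ! l = ys ! 0 \<and>
     (\<forall>i<l. E (ys ! i) (ys ! Suc i)) \<and>
     (\<forall>i. i + 2 \<le> l \<longrightarrow> ys ! (i + 2) \<noteq> ys ! i) \<and>
     ys ! (l - 1) \<noteq> ys ! 1"

definition closed_nb_walks_at :: "('a \<Rightarrow> 'a \<Rightarrow> bool) \<Rightarrow> 'a set \<Rightarrow> nat \<Rightarrow> 'a list set" where
  "closed_nb_walks_at E e l = {ys. closed_nb_walk E l ys \<and> {ys ! 0, ys ! 1} = e}"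

definition eta :: "('a \<Rightarrow> 'a \<Rightarrow> bool) \<Rightarrow> nat \<Rightarrow> nat" where
  "eta E l = (\<Sum>e\<in>graph_edges E. card (closed_nb_walks_at E e l))"

text \<open>P_G(z) = N_E + sum_{l>0} eta_l z^(l/2); only even l contribute (bipartite),
  so this is the power series N_E + sum_{m\<ge>1} eta_{2m} z^m.\<close>
definition P_G :: "('a \<Rightarrow> 'a \<Rightarrow> bool) \<Rightarrow> complex \<Rightarrow> complex" where
  "P_G E z = of_nat (num_edges E) + (\<Sum>m. of_nat (eta E (2 * Suc m)) * z ^ Suc m)"

definition region_inner :: "nat \<Rightarrow> nat \<Rightarrow> complex set" where
  "region_inner \<delta>R \<delta>B =
     {z. cmod z < 1 / sqrt (real (\<delta>R * \<delta>B))} -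
     {z. z \<in> \<real> \<and> 1 / real (\<delta>R * \<delta>B) \<le> cmod z \<and> cmod z < 1 / sqrt (real (\<delta>R * \<delta>B))}"

definition region_outer :: "nat \<Rightarrow> nat \<Rightarrow> complex set" where
  "region_outer \<delta>R \<delta>B =
     {z. cmod z > 1 / sqrt (real (\<delta>R * \<delta>B))} -
     {z. z \<in> \<real> \<and> 1 / sqrt (real (\<delta>R * \<delta>B)) < cmod z \<and> cmod z \<le> 1}"

end

theory Submission
  imports Defs "Jordan_Normal_Form.Schur_Decomposition"
begin

(* Counting closed nonbacktracking walks by their base dart shows that eta_l is the trace of
   B^l, where B is the nonbacktracking (Hashimoto) matrix on darts.  Hence near 0,
   P_G(z) = N_E + sum over the eigenvalues k of B of k^2 z / (1 - k^2 z), a rational function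
   whose only poles are the points 1 / k^2.

   An eigenfunction f of B with eigenvalue k induces the vertex function F u = sum_w f(u, w),
   which satisfies (k^2 + deg u - 1) F = k A F for the adjacency operator A.  On a biregular
   graph, pairing this equation with F on the two colour classes and applying Cauchy-Schwarz
   gives (k^2 + dR)(k^2 + dB) = k^2 s with 0 <= s <= (dR + 1)(dB + 1), unless k^2 = 1.  Such
   a k^2 lies on the circle |mu| = sqrt (dR dB) or on the real segment 1 <= |mu| <= dR dB,
   so the reciprocals 1 / k^2 avoid both regions. *)

section \<open>Nonbacktracking walks on darts\<close>

definition darts :: "('a \<Rightarrow> 'a \<Rightarrow> bool) \<Rightarrow> ('a \<times> 'a) set" where
  "darts E = {(u, w). E u w}"

definition nb_step :: "'a \<times> 'a \<Rightarrow> 'a \<times> 'a \<Rightarrow> bool" where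
  "nb_step d d' \<longleftrightarrow> snd d = fst d' \<and> snd d' \<noteq> fst d"

(* A nonbacktracking walk is recorded as the list of its darts; nb_step is the adjacency relation
   of the nonbacktracking matrix on darts. *)
definition nb_dart_walks :: "('a \<Rightarrow> 'a \<Rightarrow> bool) \<Rightarrow> nat \<Rightarrow> 'a \<times> 'a \<Rightarrow> 'a \<times> 'a \<Rightarrow> ('a \<times> 'a) list set" where
  "nb_dart_walks E k d d' = {ds. length ds = Suc k \<and> hd ds = d \<and> last ds = d' \<and>
     set ds \<subseteq> darts E \<and> successively nb_step ds}"

lemma nb_dart_walks_conv_nth:
  "ds \<in> nb_dart_walks E k d d' \<longleftrightarrow> length ds = Suc k \<and> ds ! 0 = d \<and> ds ! k = d' \<and>
     (\<forall>i\<le>k. ds ! i \<in> darts E) \<and> (\<forall>i<k. nb_step (ds ! i) (ds ! Suc i))"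
proof (cases "length ds = Suc k")
  case True
  then have "ds \<noteq> []" by auto
  with True show ?thesis
    by (auto simp: nb_dart_walks_def hd_conv_nth last_conv_nth successively_conv_nth
        set_conv_nth less_Suc_eq_le)
qed (auto simp: nb_dart_walks_def)

lemma finite_nb_dart_walks:
  assumes "finite (darts E)"
  shows "finite (nb_dart_walks E k d d')"
  by (rule finite_subset[OF _ finite_lists_length_eq[OF assms, of "Suc k"]])
    (auto simp: nb_dart_walks_def)

lemma nb_dart_walks_0:
  "nb_dart_walks E 0 d d' = (if d = d' \<and> d \<in> darts E then {[d]} else {})"
  by (auto simp: nb_dart_walks_def length_Suc_conv)

lemma nb_dart_walks_Suc:
  assumes "d' \<in> darts E"
  shows "nb_dart_walks E (Suc k) d d' =
    (\<Union>d''\<in>{d''\<in>darts E. nb_step d'' d'}. (\<lambda>ds. ds @ [d']) ` nb_dart_walks E k d d'')"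
proof (intro equalityI subsetI)
  fix ds
  assume "ds \<in> nb_dart_walks E (Suc k) d d'"
  then obtain ds' where "ds = ds' @ [d']" "ds' \<noteq> []"
    "ds' \<in> nb_dart_walks E k d (last ds')" "nb_step (last ds') d'"
    by (auto simp: nb_dart_walks_def length_Suc_conv_rev successively_append_iff)
  moreover from this have "last ds' \<in> darts E"
    using last_in_set by (auto simp: nb_dart_walks_def)
  ultimately show
      "ds \<in> (\<Union>d''\<in>{d''\<in>darts E. nb_step d'' d'}. (\<lambda>ds. ds @ [d']) ` nb_dart_walks E k d d'')"
    by blast
next
  fix ds
  assume "ds \<in> (\<Union>d''\<in>{d''\<in>darts E. nb_step d'' d'}. (\<lambda>ds. ds @ [d']) ` nb_dart_walks E k d d'')"
  then obtain d'' ds' where "nb_step d'' d'" "ds' \<in> nb_dart_walks E k d d''" "ds = ds' @ [d']"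
    by blast
  with assms show "ds \<in> nb_dart_walks E (Suc k) d d'"
    by (auto simp: nb_dart_walks_def successively_append_iff hd_append)
qed

lemma card_nb_dart_walks_Suc:
  assumes "finite (darts E)" and "d' \<in> darts E"
  shows "card (nb_dart_walks E (Suc k) d d') =
    (\<Sum>d''\<in>{d''\<in>darts E. nb_step d'' d'}. card (nb_dart_walks E k d d''))"
proof -
  have disjoint: "(\<lambda>ds. ds @ [d']) ` nb_dart_walks E k d d\<^sub>1 \<inter>
      (\<lambda>ds. ds @ [d']) ` nb_dart_walks E k d d\<^sub>2 = {}" if "d\<^sub>1 \<noteq> d\<^sub>2" for d\<^sub>1 d\<^sub>2
    using that by (auto simp: nb_dart_walks_def)
  show ?thesis
    unfolding nb_dart_walks_Suc[OF assms(2)]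
    by (subst card_UN_disjoint)
      (auto simp: assms(1) finite_nb_dart_walks disjoint card_image inj_on_def)
qed

(* A closed walk of length l as a cyclic dart sequence: its l darts followed by the base dart
   again, so that the condition at the basepoint becomes one more nb_step. *)
definition closing_darts :: "nat \<Rightarrow> 'a list \<Rightarrow> ('a \<times> 'a) list" where
  "closing_darts l ys = map (\<lambda>i. (ys ! i, ys ! Suc i)) [0..<l] @ [(ys ! 0, ys ! 1)]"

lemma length_closing_darts [simp]: "length (closing_darts l ys) = Suc l"
  by (simp add: closing_darts_def)

lemma nth_closing_darts:
  "i \<le> l \<Longrightarrow> closing_darts l ys ! i = (if i < l then (ys ! i, ys ! Suc i) else (ys ! 0, ys ! 1))"
  by (simp add: closing_darts_def nth_append)

lemma closing_darts_map_fst: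
  assumes "ds \<in> nb_dart_walks E l d d" and "1 \<le> l"
  shows "closing_darts l (map fst ds) = ds"
proof (rule nth_equalityI)
  from assms(1) have ds: "length ds = Suc l" "ds ! 0 = d" "ds ! l = d"
    "\<And>i. i < l \<Longrightarrow> nb_step (ds ! i) (ds ! Suc i)"
    by (simp_all add: nb_dart_walks_conv_nth)
  then show "length (closing_darts l (map fst ds)) = length ds"
    by simp
  fix i
  assume "i < length (closing_darts l (map fst ds))"
  then have "i \<le> l"
    by simp
  show "closing_darts l (map fst ds) ! i = ds ! i"
  proof (cases "i < l")
    case True
    then show ?thesis
      using ds(1) ds(4)[OF True] by (simp add: nth_closing_darts nb_step_def prod_eq_iff)
  next
    case False
    then show ?thesis
      using \<open>i \<le> l\<close> ds(1-3) ds(4)[of 0] assms(2)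
      by (simp add: nth_closing_darts nb_step_def prod_eq_iff)
  qed
qed

lemma map_fst_closing_darts:
  assumes "closed_nb_walk E l ys"
  shows "map fst (closing_darts l ys) = ys"
proof (rule nth_equalityI)
  from assms have ys: "length ys = Suc l" "ys ! l = ys ! 0"
    by (auto simp: closed_nb_walk_def)
  then show "length (map fst (closing_darts l ys)) = length ys"
    by simp
  fix i
  assume "i < length (map fst (closing_darts l ys))"
  then have "i \<le> l"
    by simp
  then show "map fst (closing_darts l ys) ! i = ys ! i"
    using ys(2) by (cases "i < l") (simp_all add: nth_closing_darts)
qed

lemma closed_nb_walk_map_fst:
  assumes "ds \<in> nb_dart_walks E l d d" and "1 \<le> l"
  shows "closed_nb_walk E l (map fst ds) \<and> (map fst ds ! 0, map fst ds ! 1) = d"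
proof -
  from assms(1) have ds: "length ds = Suc l" "ds ! 0 = d" "ds ! l = d"
    "\<And>i. i \<le> l \<Longrightarrow> ds ! i \<in> darts E" "\<And>i. i < l \<Longrightarrow> nb_step (ds ! i) (ds ! Suc i)"
    by (simp_all add: nb_dart_walks_conv_nth)
  have link: "fst (ds ! Suc i) = snd (ds ! i)" if "i < l" for i
    using ds(5)[OF that] by (simp add: nb_step_def)
  have "E (fst (ds ! i)) (fst (ds ! Suc i))" if "i < l" for i
    using ds(4)[of i] link[OF that] that by (auto simp: darts_def)
  moreover have "fst (ds ! (i + 2)) \<noteq> fst (ds ! i)" if "i + 2 \<le> l" for i
    using ds(5)[of "Suc i"] ds(5)[of i] that by (simp add: nb_step_def)
  moreover have "fst (ds ! (l - 1)) \<noteq> fst (ds ! 1)"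
    using ds(5)[of "l - 1"] link[of 0] ds(2,3) assms(2) by (auto simp: nb_step_def)
  moreover have "(fst (ds ! 0), fst (ds ! 1)) = d"
    using link[of 0] ds(2) assms(2) by simp
  ultimately show ?thesis
    using ds(1-3) assms(2) by (simp add: closed_nb_walk_def)
qed

lemma closing_darts_in_nb_dart_walks:
  assumes "closed_nb_walk E l ys" and "1 \<le> l"
  shows "closing_darts l ys \<in> nb_dart_walks E l (ys ! 0, ys ! 1) (ys ! 0, ys ! 1)"
proof -
  from assms(1) have ys: "ys ! l = ys ! 0" "\<And>i. i < l \<Longrightarrow> E (ys ! i) (ys ! Suc i)"
    "\<And>i. i + 2 \<le> l \<Longrightarrow> ys ! (i + 2) \<noteq> ys ! i" "ys ! (l - 1) \<noteq> ys ! 1"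
    by (auto simp: closed_nb_walk_def)
  have "closing_darts l ys ! i \<in> darts E" if "i \<le> l" for i
    using ys(2)[of i] ys(2)[of 0] that assms(2) by (auto simp: nth_closing_darts darts_def)
  moreover have "nb_step (closing_darts l ys ! i) (closing_darts l ys ! Suc i)" if "i < l" for i
  proof (cases "Suc i < l")
    case True
    then show ?thesis
      using ys(3)[of i] that by (simp add: nth_closing_darts nb_step_def)
  next
    case False
    then have "i = l - 1" "Suc i = l"
      using that by auto
    then show ?thesis
      using ys(1,4) by (simp add: nth_closing_darts nb_step_def)
  qed
  ultimately show ?thesis
    using assms(2) by (simp add: nb_dart_walks_conv_nth nth_closing_darts)
qed

lemma bij_betw_closed_nb_walks:
  assumes "1 \<le> l"
  shows "bij_betw (map fst) (nb_dart_walks E l d d)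
    {ys. closed_nb_walk E l ys \<and> (ys ! 0, ys ! 1) = d}"
proof (rule bij_betw_byWitness[where f' = "closing_darts l"])
  show "\<forall>ds\<in>nb_dart_walks E l d d. closing_darts l (map fst ds) = ds"
    using closing_darts_map_fst assms by blast
  show "\<forall>ys\<in>{ys. closed_nb_walk E l ys \<and> (ys ! 0, ys ! 1) = d}. map fst (closing_darts l ys) = ys"
    using map_fst_closing_darts by blast
  show "map fst ` nb_dart_walks E l d d \<subseteq> {ys. closed_nb_walk E l ys \<and> (ys ! 0, ys ! 1) = d}"
    using closed_nb_walk_map_fst assms by blast
  show "closing_darts l ` {ys. closed_nb_walk E l ys \<and> (ys ! 0, ys ! 1) = d}
      \<subseteq> nb_dart_walks E l d d"
    using closing_darts_in_nb_dart_walks assms by blast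
qed

lemma card_eq_sum_card_fibres:
  assumes "finite S" "finite T" "g ` S \<subseteq> T"
  shows "card S = (\<Sum>y\<in>T. card {x\<in>S. g x = y})"
  using sum.group[OF assms, of "\<lambda>_. 1 :: nat"] by simp

lemma eta_eq_sum_closed_dart_walks:
  assumes "finite (darts E)" and "1 \<le> l"
  shows "eta E l = (\<Sum>d\<in>darts E. card (nb_dart_walks E l d d))"
proof -
  let ?C = "{ys. closed_nb_walk E l ys}"
  have base_dart: "(ys ! 0, ys ! 1) \<in> darts E" if "closed_nb_walk E l ys" for ys
    using that assms(2) by (auto simp: closed_nb_walk_def darts_def)
  have fibre: "{ys\<in>?C. (ys ! 0, ys ! 1) = d} = map fst ` nb_dart_walks E l d d" for d
  proof -
    have "{ys\<in>?C. (ys ! 0, ys ! 1) = d} = {ys. closed_nb_walk E l ys \<and> (ys ! 0, ys ! 1) = d}"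
      by simp
    also have "\<dots> = map fst ` nb_dart_walks E l d d"
      by (rule sym, rule bij_betw_imp_surj_on[OF bij_betw_closed_nb_walks[OF assms(2)]])
    finally show ?thesis .
  qed
  have "?C \<subseteq> (\<Union>d\<in>darts E. map fst ` nb_dart_walks E l d d)"
  proof
    fix ys
    assume "ys \<in> ?C"
    then have "ys \<in> map fst ` nb_dart_walks E l (ys ! 0, ys ! 1) (ys ! 0, ys ! 1)"
      unfolding fibre[symmetric] by simp
    with base_dart \<open>ys \<in> ?C\<close> show "ys \<in> (\<Union>d\<in>darts E. map fst ` nb_dart_walks E l d d)"
      by blast
  qed
  then have "finite ?C"
    by (rule finite_subset) (simp add: assms(1) finite_nb_dart_walks)
  have "graph_edges E = (\<lambda>(u, w). {u, w}) ` darts E"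
    by (auto simp: graph_edges_def darts_def)
  then have "finite (graph_edges E)"
    using assms(1) by simp
  have "eta E l = (\<Sum>e\<in>graph_edges E. card {ys\<in>?C. {ys ! 0, ys ! 1} = e})"
    by (simp add: eta_def closed_nb_walks_at_def)
  also have "\<dots> = card ?C"
    using base_dart \<open>finite ?C\<close> \<open>finite (graph_edges E)\<close>
    by (intro card_eq_sum_card_fibres[symmetric]) (auto simp: graph_edges_def darts_def)
  also have "\<dots> = (\<Sum>d\<in>darts E. card {ys\<in>?C. (ys ! 0, ys ! 1) = d})"
    using base_dart \<open>finite ?C\<close> assms(1) by (intro card_eq_sum_card_fibres) auto
  also have "\<dots> = (\<Sum>d\<in>darts E. card (nb_dart_walks E l d d))"
    by (simp only: fibre card_image bij_betw_imp_inj_on[OF bij_betw_closed_nb_walks[OF assms(2)]])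
  finally show ?thesis .
qed

section \<open>Nonbacktracking eigenfunctions\<close>

definition nb_eigenvalue :: "('a \<Rightarrow> 'a \<Rightarrow> bool) \<Rightarrow> complex \<Rightarrow> bool" where
  "nb_eigenvalue E \<kappa> \<longleftrightarrow> (\<exists>f. (\<exists>u w. E u w \<and> f (u, w) \<noteq> 0) \<and>
     (\<forall>u w. E u w \<longrightarrow> \<kappa> * f (u, w) = (\<Sum>x\<in>{x. E w x} - {u}. f (w, x))))"

definition out_sum :: "('a \<Rightarrow> 'a \<Rightarrow> bool) \<Rightarrow> ('a \<times> 'a \<Rightarrow> complex) \<Rightarrow> 'a \<Rightarrow> complex" where
  "out_sum E f u = (\<Sum>w | E u w. f (u, w))"

lemma nb_eigenfunction_dart_equation:
  assumes sym: "\<And>u w. E u w \<Longrightarrow> E w u" and fin: "\<And>u. finite {w. E u w}"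
    and eigen: "\<And>u w. E u w \<Longrightarrow> \<kappa> * f (u, w) = (\<Sum>x\<in>{x. E w x} - {u}. f (w, x))"
    and "E u w"
  shows "(\<kappa>\<^sup>2 - 1) * f (u, w) = \<kappa> * out_sum E f w - out_sum E f u"
proof -
  have step: "\<kappa> * f (u, w) = out_sum E f w - f (w, u)" if "E u w" for u w
    using eigen[OF that] sum.remove[OF fin, of u w "\<lambda>x. f (w, x)"] sym[OF that]
    by (simp add: out_sum_def)
  have "\<kappa> * out_sum E f w - out_sum E f u =
      \<kappa> * (\<kappa> * f (u, w) + f (w, u)) - (\<kappa> * f (w, u) + f (u, w))"
    using step[OF \<open>E u w\<close>] step[OF sym[OF \<open>E u w\<close>]] by simp
  then show ?thesis
    by (simp add: power2_eq_square algebra_simps)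
qed

lemma nb_eigenfunction_vertex_equation:
  assumes sym: "\<And>u w. E u w \<Longrightarrow> E w u" and fin: "\<And>u. finite {w. E u w}"
    and eigen: "\<And>u w. E u w \<Longrightarrow> \<kappa> * f (u, w) = (\<Sum>x\<in>{x. E w x} - {u}. f (w, x))"
  shows "(\<kappa>\<^sup>2 - 1 + of_nat (card {w. E u w})) * out_sum E f u =
    \<kappa> * (\<Sum>w | E u w. out_sum E f w)"
proof -
  have "(\<kappa>\<^sup>2 - 1) * out_sum E f u = (\<Sum>w | E u w. (\<kappa>\<^sup>2 - 1) * f (u, w))"
    by (simp add: out_sum_def sum_distrib_left)
  also have "\<dots> = (\<Sum>w | E u w. \<kappa> * out_sum E f w - out_sum E f u)"
    using nb_eigenfunction_dart_equation[OF sym fin eigen] by (intro sum.cong) simp_all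
  finally show ?thesis
    by (simp add: sum_subtractf sum_distrib_left algebra_simps)
qed

section \<open>Traces of powers of a matrix\<close>

definition trace_mat :: "'a::comm_ring_1 mat \<Rightarrow> 'a" where
  "trace_mat A = (\<Sum>i<dim_row A. A $$ (i, i))"

lemma index_mult_mat_sum:
  assumes "A \<in> carrier_mat n m" "B \<in> carrier_mat m k" "i < n" "j < k"
  shows "(A * B) $$ (i, j) = (\<Sum>l<m. A $$ (i, l) * B $$ (l, j))"
  using assms by (simp add: scalar_prod_def atLeast0LessThan)

lemma trace_mat_mult_comm:
  fixes A B :: "'a::comm_ring_1 mat"
  assumes A: "A \<in> carrier_mat n m" and B: "B \<in> carrier_mat m n"
  shows "trace_mat (A * B) = trace_mat (B * A)"
proof -
  have "trace_mat (A * B) = (\<Sum>i<n. (A * B) $$ (i, i))"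
    using A by (simp add: trace_mat_def)
  also have "\<dots> = (\<Sum>i<n. \<Sum>j<m. A $$ (i, j) * B $$ (j, i))"
    by (intro sum.cong refl index_mult_mat_sum[OF A B]) auto
  also have "\<dots> = (\<Sum>j<m. \<Sum>i<n. B $$ (j, i) * A $$ (i, j))"
    by (subst sum.swap) (simp add: mult.commute)
  also have "\<dots> = (\<Sum>j<m. (B * A) $$ (j, j))"
    by (intro sum.cong refl index_mult_mat_sum[OF B A, symmetric]) auto
  also have "\<dots> = trace_mat (B * A)"
    using B by (simp add: trace_mat_def)
  finally show ?thesis .
qed

lemma trace_mat_similar:
  fixes A T :: "'a::comm_ring_1 mat"
  assumes "similar_mat_wit A T P Q"
  shows "trace_mat A = trace_mat T"
proof -
  obtain n where carrier: "A \<in> carrier_mat n n" "T \<in> carrier_mat n n" "P \<in> carrier_mat n n"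
      "Q \<in> carrier_mat n n"
    and "Q * P = 1\<^sub>m n" "A = P * T * Q"
    using assms unfolding similar_mat_wit_def Let_def by blast
  then have "trace_mat A = trace_mat (Q * (P * T))"
    using trace_mat_mult_comm[of "P * T" n n Q] by simp
  also have "Q * (P * T) = T"
    using carrier \<open>Q * P = 1\<^sub>m n\<close> by (simp add: assoc_mult_mat[symmetric, of _ n n _ n _ n])
  finally show ?thesis .
qed

lemma upper_triangular_mult:
  fixes A B :: "'a::comm_ring_1 mat"
  assumes A: "A \<in> carrier_mat n n" and B: "B \<in> carrier_mat n n"
    and ut: "upper_triangular A" "upper_triangular B"
  shows "upper_triangular (A * B)"
    and "\<And>i. i < n \<Longrightarrow> (A * B) $$ (i, i) = A $$ (i, i) * B $$ (i, i)"
proof -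
  have term_zero: "A $$ (i, l) * B $$ (l, j) = 0"
    if "i < n" "l < n" "j \<le> i" "l \<noteq> i \<or> j < i" for i j l
  proof (cases "l < i")
    case True
    then have "A $$ (i, l) = 0"
      using ut(1) A \<open>i < n\<close> by (simp add: upper_triangularD)
    then show ?thesis by simp
  next
    case False
    with that have "j < l"
      by linarith
    then have "B $$ (l, j) = 0"
      using ut(2) B \<open>l < n\<close> by (simp add: upper_triangularD)
    then show ?thesis by simp
  qed
  show "upper_triangular (A * B)"
  proof (rule upper_triangularI)
    fix i j
    assume "j < i" "i < dim_row (A * B)"
    with A have "i < n" "j < n"
      by simp_all
    then have "(A * B) $$ (i, j) = (\<Sum>l<n. A $$ (i, l) * B $$ (l, j))"
      by (rule index_mult_mat_sum[OF A B])
    also have "\<dots> = 0"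
      using \<open>j < i\<close> \<open>i < n\<close> by (intro sum.neutral) (simp add: term_zero)
    finally show "(A * B) $$ (i, j) = 0" .
  qed
  show "(A * B) $$ (i, i) = A $$ (i, i) * B $$ (i, i)" if "i < n" for i
  proof -
    have "(A * B) $$ (i, i) = (\<Sum>l<n. A $$ (i, l) * B $$ (l, i))"
      by (rule index_mult_mat_sum[OF A B that that])
    also have "\<dots> = A $$ (i, i) * B $$ (i, i) + (\<Sum>l\<in>{..<n} - {i}. A $$ (i, l) * B $$ (l, i))"
      using that by (simp add: sum.remove)
    also have "(\<Sum>l\<in>{..<n} - {i}. A $$ (i, l) * B $$ (l, i)) = 0"
      using that by (intro sum.neutral) (simp add: term_zero)
    finally show ?thesis by simp
  qed
qed

lemma upper_triangular_pow:
  fixes A :: "'a::comm_ring_1 mat"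
  assumes A: "A \<in> carrier_mat n n" and "upper_triangular A"
  shows "upper_triangular (A ^\<^sub>m k) \<and> (\<forall>i<n. (A ^\<^sub>m k) $$ (i, i) = A $$ (i, i) ^ k)"
proof (induction k)
  case 0
  show ?case
    using A by auto
next
  case (Suc k)
  have "A ^\<^sub>m k \<in> carrier_mat n n"
    using A by simp
  with Suc A assms(2) show ?case
    using upper_triangular_mult[of "A ^\<^sub>m k" n A] by (simp add: power_Suc2)
qed

lemma trace_mat_pow_eq_sum_eigenvalue_powers:
  fixes A :: "complex mat"
  assumes A: "A \<in> carrier_mat n n" and char_poly: "char_poly A = (\<Prod>a\<leftarrow>as. [:- a, 1:])"
  shows "trace_mat (A ^\<^sub>m k) = (\<Sum>a\<leftarrow>as. a ^ k)"
proof -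
  obtain T P Q where "schur_decomposition A as = (T, P, Q)"
    by (cases "schur_decomposition A as")
  from schur_decomposition[OF A char_poly this]
  have sim: "similar_mat_wit A T P Q" and "upper_triangular T" and diag: "diag_mat T = as"
    by auto
  have T: "T \<in> carrier_mat n n"
    using similar_mat_witD2[OF A sim] by simp
  have "trace_mat (A ^\<^sub>m k) = trace_mat (T ^\<^sub>m k)"
    by (rule trace_mat_similar[OF similar_mat_wit_pow[OF sim]])
  also have "\<dots> = (\<Sum>i<n. T $$ (i, i) ^ k)"
    using T upper_triangular_pow[OF T \<open>upper_triangular T\<close>] by (simp add: trace_mat_def)
  also have "\<dots> = (\<Sum>a\<leftarrow>as. a ^ k)"
    using T by (simp add: diag[symmetric] diag_mat_def sum_list_sum_nth atLeast0LessThan)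
  finally show ?thesis .
qed

section \<open>The nonbacktracking matrix\<close>

definition nb_matrix :: "('a \<times> 'a) list \<Rightarrow> complex mat" where
  "nb_matrix ds = mat (length ds) (length ds) (\<lambda>(i, j). if nb_step (ds ! i) (ds ! j) then 1 else 0)"

lemma nb_matrix_carrier: "nb_matrix ds \<in> carrier_mat (length ds) (length ds)"
  by (simp add: nb_matrix_def)

lemma sum_set_distinct_conv_nth:
  "distinct ds \<Longrightarrow> sum g (set ds) = (\<Sum>i<length ds. g (ds ! i))"
  using sum.reindex_bij_betw[OF bij_betw_nth[OF _ refl refl]] by (metis comp_apply)

lemma nb_matrix_pow_entry:
  assumes dist: "distinct ds" and set_ds: "set ds = darts E" and i: "i < length ds"
  shows "j < length ds \<Longrightarrow>
    (nb_matrix ds ^\<^sub>m k) $$ (i, j) = of_nat (card (nb_dart_walks E k (ds ! i) (ds ! j)))"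
proof (induction k arbitrary: j)
  case 0
  then show ?case
    using dist set_ds i nth_mem[of j ds] nb_matrix_carrier[of ds]
    by (simp add: nb_dart_walks_0 nth_eq_iff_index_eq)
next
  case (Suc k)
  let ?B = "nb_matrix ds" and ?n = "length ds"
  have "ds ! j \<in> darts E"
    using Suc.prems set_ds nth_mem by blast
  have "(?B ^\<^sub>m Suc k) $$ (i, j) = (\<Sum>l<?n. (?B ^\<^sub>m k) $$ (i, l) * ?B $$ (l, j))"
    unfolding pow_mat.simps(2) using nb_matrix_carrier[of ds] i Suc.prems
    by (intro index_mult_mat_sum[of _ ?n ?n]) auto
  also have "\<dots> = (\<Sum>l<?n. if nb_step (ds ! l) (ds ! j)
      then of_nat (card (nb_dart_walks E k (ds ! i) (ds ! l))) else 0)"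
    using Suc by (intro sum.cong) (simp_all add: nb_matrix_def)
  also have "\<dots> = (\<Sum>d\<in>darts E.
      if nb_step d (ds ! j) then of_nat (card (nb_dart_walks E k (ds ! i) d)) else 0)"
    by (simp add: sum_set_distinct_conv_nth[OF dist] flip: set_ds)
  also have "\<dots> = (\<Sum>d\<in>{d\<in>darts E. nb_step d (ds ! j)}. of_nat (card (nb_dart_walks E k (ds ! i) d)))"
    using finite_set[of ds] set_ds by (simp add: sum.inter_filter)
  also have "\<dots> = of_nat (card (nb_dart_walks E (Suc k) (ds ! i) (ds ! j)))"
    using finite_set[of ds] set_ds \<open>ds ! j \<in> darts E\<close> by (simp add: card_nb_dart_walks_Suc)
  finally show ?case .
qed

lemma trace_nb_matrix_pow:
  assumes "distinct ds" "set ds = darts E" "1 \<le> l"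
  shows "trace_mat (nb_matrix ds ^\<^sub>m l) = of_nat (eta E l)"
proof -
  have "trace_mat (nb_matrix ds ^\<^sub>m l) =
      (\<Sum>i<length ds. of_nat (card (nb_dart_walks E l (ds ! i) (ds ! i))))"
    using nb_matrix_carrier[of ds] nb_matrix_pow_entry[OF assms(1,2)] by (simp add: trace_mat_def)
  also have "\<dots> = of_nat (\<Sum>d\<in>darts E. card (nb_dart_walks E l d d))"
    by (simp add: sum_set_distinct_conv_nth[OF assms(1)] flip: assms(2))
  also have "\<dots> = of_nat (eta E l)"
    using eta_eq_sum_closed_dart_walks[of E l] assms by (metis List.finite_set)
  finally show ?thesis .
qed

lemma nb_matrix_mult_vec:
  assumes dist: "distinct ds" and set_ds: "set ds = darts E"
    and "i < length ds" and "ds ! i = (u, w)"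
  shows "(nb_matrix ds *\<^sub>v vec (length ds) (\<lambda>l. f (ds ! l))) $ i = (\<Sum>x\<in>{x. E w x} - {u}. f (w, x))"
proof -
  have "(nb_matrix ds *\<^sub>v vec (length ds) (\<lambda>l. f (ds ! l))) $ i =
      (\<Sum>l<length ds. if nb_step (u, w) (ds ! l) then f (ds ! l) else 0)"
    using assms(3,4) by (auto simp: scalar_prod_def atLeast0LessThan nb_matrix_def intro!: sum.cong)
  also have "\<dots> = (\<Sum>d\<in>darts E. if nb_step (u, w) d then f d else 0)"
    by (simp add: sum_set_distinct_conv_nth[OF dist] flip: set_ds)
  also have "\<dots> = (\<Sum>d\<in>{d\<in>darts E. nb_step (u, w) d}. f d)"
    using finite_set[of ds] set_ds by (simp add: sum.inter_filter)
  also have "{d\<in>darts E. nb_step (u, w) d} = Pair w ` ({x. E w x} - {u})"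
    by (auto simp: darts_def nb_step_def)
  also have "(\<Sum>d\<in>\<dots>. f d) = (\<Sum>x\<in>{x. E w x} - {u}. f (w, x))"
    by (simp add: sum.reindex inj_on_def)
  finally show ?thesis .
qed

lemma nb_eigenvalue_if_eigenvalue:
  assumes dist: "distinct ds" and set_ds: "set ds = darts E"
    and "eigenvalue (nb_matrix ds) \<kappa>"
  shows "nb_eigenvalue E \<kappa>"
proof -
  let ?n = "length ds"
  obtain v where v: "v \<in> carrier_vec ?n" "v \<noteq> 0\<^sub>v ?n" "nb_matrix ds *\<^sub>v v = \<kappa> \<cdot>\<^sub>v v"
    using assms(3) nb_matrix_carrier[of ds] unfolding eigenvalue_def eigenvector_def by auto
  have bij: "bij_betw ((!) ds) {..<?n} (darts E)"
    using bij_betw_nth[OF dist refl set_ds[symmetric]] .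
  define f where "f d = v $ inv_into {..<?n} ((!) ds) d" for d
  have f_nth: "f (ds ! i) = v $ i" if "i < ?n" for i
    using bij_betw_inv_into_left[OF bij] that by (simp add: f_def)
  then have v_eq: "v = vec ?n (\<lambda>l. f (ds ! l))"
    using v(1) by (intro eq_vecI) auto
  have "\<exists>i<?n. v $ i \<noteq> 0"
    using v(1,2) by (metis carrier_vecD eq_vecI index_zero_vec)
  then obtain i where "i < ?n" "f (ds ! i) \<noteq> 0"
    using f_nth by auto
  moreover have "ds ! i \<in> darts E"
    using \<open>i < ?n\<close> set_ds nth_mem by blast
  ultimately have "\<exists>u w. E u w \<and> f (u, w) \<noteq> 0"
    by (cases "ds ! i") (auto simp: darts_def)
  moreover have "\<kappa> * f (u, w) = (\<Sum>x\<in>{x. E w x} - {u}. f (w, x))" if "E u w" for u w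
  proof -
    have "(u, w) \<in> set ds"
      using \<open>E u w\<close> set_ds by (simp add: darts_def)
    then obtain i where i: "i < ?n" "ds ! i = (u, w)"
      by (auto simp: in_set_conv_nth)
    then have "\<kappa> * f (u, w) = (nb_matrix ds *\<^sub>v v) $ i"
      using v(1,3) f_nth[OF i(1)] by simp
    then show ?thesis
      using nb_matrix_mult_vec[OF dist set_ds i] by (simp add: v_eq)
  qed
  ultimately show ?thesis
    unfolding nb_eigenvalue_def by blast
qed

lemma eta_eq_sum_nb_eigenvalue_powers:
  assumes "finite (darts E)"
  obtains as where "\<forall>a\<in>set as. nb_eigenvalue E a"
    and "\<And>l. 1 \<le> l \<Longrightarrow> of_nat (eta E l) = (\<Sum>a\<leftarrow>as. a ^ l)"
proof -
  obtain ds where dist: "distinct ds" and set_ds: "set ds = darts E"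
    using finite_distinct_list[OF assms] by blast
  obtain as where char_poly: "char_poly (nb_matrix ds) = (\<Prod>a\<leftarrow>as. [:- a, 1:])"
    using char_poly_factorized[OF nb_matrix_carrier] by blast
  have "nb_eigenvalue E a" if "a \<in> set as" for a
  proof (rule nb_eigenvalue_if_eigenvalue[OF dist set_ds])
    have "poly (char_poly (nb_matrix ds)) a = 0"
      using that by (simp add: char_poly poly_prod_list prod_list_zero_iff)
    then show "eigenvalue (nb_matrix ds) a"
      using eigenvalue_root_char_poly[OF nb_matrix_carrier[of ds]] by simp
  qed
  moreover have "of_nat (eta E l) = (\<Sum>a\<leftarrow>as. a ^ l)" if "1 \<le> l" for l
    using trace_nb_matrix_pow[OF dist set_ds that]
      trace_mat_pow_eq_sum_eigenvalue_powers[OF nb_matrix_carrier char_poly] by simp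
  ultimately show ?thesis
    using that by blast
qed

section \<open>Location of the nonbacktracking eigenvalues\<close>

lemma real_quadratic_root_bounds:
  fixes x a b s :: real
  assumes a: "1 \<le> a" and b: "1 \<le> b" and x: "x \<noteq> 0"
    and eq: "(x + a) * (x + b) = x * s" and s: "0 \<le> s" "s \<le> (a + 1) * (b + 1)"
  shows "1 \<le> \<bar>x\<bar> \<and> \<bar>x\<bar> \<le> a * b"
proof -
  have ab: "a \<le> a * b" "b \<le> a * b"
    using a b by (simp_all add: mult_le_cancel_left1 mult_le_cancel_right1)
  show ?thesis
  proof (cases "x > 0")
    case True
    have "(x - 1) * (x - a * b) = (s - (a + 1) * (b + 1)) * x"
      using eq by (simp add: algebra_simps)
    also have "\<dots> \<le> 0"
      using True s by (simp add: mult_nonpos_nonneg)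
    finally have "(x - 1) * (x - a * b) \<le> 0" .
    then show ?thesis
      using True a ab unfolding mult_le_0_iff by linarith
  next
    case False
    with x have "x < 0" by simp
    with eq s have "(x + a) * (x + b) \<le> 0"
      by (simp add: mult_nonpos_nonneg)
    with \<open>x < 0\<close> a b ab show ?thesis
      unfolding mult_le_0_iff by linarith
  qed
qed

lemma complex_quadratic_root_location:
  fixes \<mu> :: complex and a b s :: real
  assumes a: "1 \<le> a" and b: "1 \<le> b" and \<mu>: "\<mu> \<noteq> 0"
    and eq: "(\<mu> + of_real a) * (\<mu> + of_real b) = \<mu> * of_real s"
    and s: "0 \<le> s" "s \<le> (a + 1) * (b + 1)"
  shows "cmod \<mu> = sqrt (a * b) \<or> (\<mu> \<in> \<real> \<and> 1 \<le> cmod \<mu> \<and> cmod \<mu> \<le> a * b)"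
proof -
  obtain x y where xy: "\<mu> = Complex x y"
    by (cases \<mu>)
  have re: "x * x - y * y + (a + b) * x + a * b = x * s"
    and im: "(2 * x + a + b - s) * y = 0"
    using arg_cong[OF eq, of Re] arg_cong[OF eq, of Im]
    by (simp_all add: xy algebra_simps)
  show ?thesis
  proof (cases "y = 0")
    case True
    with xy \<mu> have "x \<noteq> 0" "\<mu> \<in> \<real>" "cmod \<mu> = \<bar>x\<bar>"
      by (auto simp: complex_eq_iff complex_is_Real_iff cmod_eq_Re)
    moreover have "(x + a) * (x + b) = x * s"
      using re True by (simp add: algebra_simps)
    ultimately show ?thesis
      using real_quadratic_root_bounds[OF a b _ _ s] by simp
  next
    case False
    with im have "s = 2 * x + a + b"
      by simp
    with re have "x * x + y * y = a * b"
      by (simp add: algebra_simps)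
    then show ?thesis
      by (simp add: xy cmod_def power2_eq_square)
  qed
qed

lemma inverse_not_in_regions:
  fixes \<mu> :: complex and \<delta>R \<delta>B :: nat
  assumes "1 \<le> \<delta>R" "1 \<le> \<delta>B"
    and \<mu>: "cmod \<mu> = sqrt (real \<delta>R * real \<delta>B) \<or>
       (\<mu> \<in> \<real> \<and> 1 \<le> cmod \<mu> \<and> cmod \<mu> \<le> real \<delta>R * real \<delta>B)"
  shows "1 / \<mu> \<notin> region_inner \<delta>R \<delta>B \<union> region_outer \<delta>R \<delta>B"
proof -
  have "1 \<le> \<delta>R * \<delta>B"
    using assms(1,2) by simp
  then have "1 \<le> real \<delta>R * real \<delta>B"
    by (metis of_nat_1 of_nat_le_iff of_nat_mult)
  with \<mu> have "\<mu> \<noteq> 0"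
    by auto
  have norm_inv: "cmod (1 / \<mu>) = 1 / cmod \<mu>"
    by (simp add: norm_divide)
  from \<mu> show ?thesis
  proof
    assume "cmod \<mu> = sqrt (real \<delta>R * real \<delta>B)"
    then show ?thesis
      by (simp add: norm_inv region_inner_def region_outer_def)
  next
    assume "\<mu> \<in> \<real> \<and> 1 \<le> cmod \<mu> \<and> cmod \<mu> \<le> real \<delta>R * real \<delta>B"
    with \<open>\<mu> \<noteq> 0\<close> have "1 / \<mu> \<in> \<real>" "cmod (1 / \<mu>) \<le> 1"
      "1 / (real \<delta>R * real \<delta>B) \<le> cmod (1 / \<mu>)"
      by (auto simp: norm_inv frac_le)
    then show ?thesis
      by (auto simp: region_inner_def region_outer_def)
  qed
qed

locale biregular =
  fixes V VR VB :: "'a set" and E :: "'a \<Rightarrow> 'a \<Rightarrow> bool" and \<delta>R \<delta>B :: nat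
  assumes biregular_graph: "biregular_graph V VR VB E \<delta>R \<delta>B"
begin

lemma finite_V: "finite V"
  and V_eq: "V = VR \<union> VB"
  and edge_sym: "E u w \<Longrightarrow> E w u"
  and edge_R_B: "E u w \<Longrightarrow> u \<in> VR \<Longrightarrow> w \<in> VB"
  and edge_B_R: "E u w \<Longrightarrow> u \<in> VB \<Longrightarrow> w \<in> VR"
  and edge_V: "E u w \<Longrightarrow> u \<in> V \<and> w \<in> V"
  and degree_R: "u \<in> VR \<Longrightarrow> card {w. E u w} = \<delta>R + 1"
  and degree_B: "u \<in> VB \<Longrightarrow> card {w. E u w} = \<delta>B + 1"
  and one_le_\<delta>R: "1 \<le> \<delta>R" and one_le_\<delta>B: "1 \<le> \<delta>B"
  using biregular_graph unfolding biregular_graph_def by blast+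

lemma finite_VR: "finite VR" and finite_VB: "finite VB"
  using finite_V V_eq by auto

lemma finite_neighbours: "finite {w. E u w}"
  using finite_subset[OF _ finite_V, of "{w. E u w}"] edge_V by blast

lemma finite_darts: "finite (darts E)"
  by (rule finite_subset[of _ "V \<times> V"]) (auto simp: darts_def edge_V finite_V)

lemma sum_edges_swap:
  "(\<Sum>u\<in>VR. \<Sum>w | E u w. g u w) = (\<Sum>w\<in>VB. \<Sum>u | E w u. g u w)"
proof -
  have "(\<Sum>u\<in>VR. \<Sum>w | E u w. g u w) = (\<Sum>u\<in>VR. \<Sum>w | w \<in> VB \<and> E u w. g u w)"
    using edge_R_B by (intro sum.cong) (auto intro!: sum.cong)
  also have "\<dots> = (\<Sum>w\<in>VB. \<Sum>u | u \<in> VR \<and> E u w. g u w)"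
    by (rule sum.swap_restrict[OF finite_VR finite_VB])
  also have "\<dots> = (\<Sum>w\<in>VB. \<Sum>u | E w u. g u w)"
    using edge_sym edge_B_R by (intro sum.cong) (auto intro!: sum.cong)
  finally show ?thesis .
qed

lemma adjacency_form_bound:
  fixes F :: "'a \<Rightarrow> complex"
  shows "(cmod (\<Sum>u\<in>VR. \<Sum>w | E u w. cnj (F u) * F w))\<^sup>2 \<le>
    (real \<delta>R + 1) * (real \<delta>B + 1) * (\<Sum>u\<in>VR. (cmod (F u))\<^sup>2) * (\<Sum>w\<in>VB. (cmod (F w))\<^sup>2)"
proof -
  let ?N = "\<lambda>u. {w. E u w}"
  have as_Sigma: "(\<Sum>u\<in>VR. \<Sum>w\<in>?N u. g u w) = (\<Sum>p\<in>Sigma VR ?N. g (fst p) (snd p))"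
    for g :: "'a \<Rightarrow> 'a \<Rightarrow> real"
    using finite_VR finite_neighbours by (simp add: sum.Sigma split_def)
  have "cmod (\<Sum>u\<in>VR. \<Sum>w\<in>?N u. cnj (F u) * F w) \<le> (\<Sum>u\<in>VR. \<Sum>w\<in>?N u. cmod (F u) * cmod (F w))"
    by (intro order.trans[OF norm_sum] sum_mono) (simp add: norm_mult order.trans[OF norm_sum])
  then have "(cmod (\<Sum>u\<in>VR. \<Sum>w\<in>?N u. cnj (F u) * F w))\<^sup>2 \<le>
      (\<Sum>u\<in>VR. \<Sum>w\<in>?N u. cmod (F u) * cmod (F w))\<^sup>2"
    by (simp add: power_mono)
  also have "\<dots> \<le> (\<Sum>u\<in>VR. \<Sum>w\<in>?N u. (cmod (F u))\<^sup>2) * (\<Sum>u\<in>VR. \<Sum>w\<in>?N u. (cmod (F w))\<^sup>2)"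
    unfolding as_Sigma by (rule Cauchy_Schwarz_ineq_sum)
  also have "(\<Sum>u\<in>VR. \<Sum>w\<in>?N u. (cmod (F u))\<^sup>2) = (real \<delta>R + 1) * (\<Sum>u\<in>VR. (cmod (F u))\<^sup>2)"
    by (simp add: sum_distrib_left degree_R add.commute)
  also have "(\<Sum>u\<in>VR. \<Sum>w\<in>?N u. (cmod (F w))\<^sup>2) = (real \<delta>B + 1) * (\<Sum>w\<in>VB. (cmod (F w))\<^sup>2)"
    by (simp add: sum_edges_swap sum_distrib_left degree_B add.commute)
  finally show ?thesis
    by (simp add: algebra_simps)
qed

lemma colour_class_pairing:
  fixes F :: "'a \<Rightarrow> complex"
  assumes eqR: "\<And>u. u \<in> VR \<Longrightarrow> (\<mu> + of_nat \<delta>R) * F u = \<kappa> * (\<Sum>w | E u w. F w)"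
    and eqB: "\<And>u. u \<in> VB \<Longrightarrow> (\<mu> + of_nat \<delta>B) * F u = \<kappa> * (\<Sum>w | E u w. F w)"
  shows "(\<mu> + of_nat \<delta>R) * of_real (\<Sum>u\<in>VR. (cmod (F u))\<^sup>2) =
      \<kappa> * (\<Sum>u\<in>VR. \<Sum>w | E u w. cnj (F u) * F w)"
    and "(\<mu> + of_nat \<delta>B) * of_real (\<Sum>w\<in>VB. (cmod (F w))\<^sup>2) =
      \<kappa> * cnj (\<Sum>u\<in>VR. \<Sum>w | E u w. cnj (F u) * F w)"
proof -
  have norm_sq: "(of_real (cmod z))\<^sup>2 = cnj z * z" for z :: complex
    by (metis complex_norm_square mult.commute of_real_power)
  have "(\<mu> + of_nat \<delta>R) * of_real (\<Sum>u\<in>VR. (cmod (F u))\<^sup>2) =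
      (\<Sum>u\<in>VR. cnj (F u) * ((\<mu> + of_nat \<delta>R) * F u))"
    by (simp add: norm_sq sum_distrib_left mult_ac)
  also have "\<dots> = (\<Sum>u\<in>VR. cnj (F u) * (\<kappa> * (\<Sum>w | E u w. F w)))"
    by (intro sum.cong) (simp_all add: eqR)
  finally show "(\<mu> + of_nat \<delta>R) * of_real (\<Sum>u\<in>VR. (cmod (F u))\<^sup>2) =
      \<kappa> * (\<Sum>u\<in>VR. \<Sum>w | E u w. cnj (F u) * F w)"
    by (simp add: sum_distrib_left mult_ac)
  have "(\<mu> + of_nat \<delta>B) * of_real (\<Sum>w\<in>VB. (cmod (F w))\<^sup>2) =
      (\<Sum>w\<in>VB. cnj (F w) * ((\<mu> + of_nat \<delta>B) * F w))"
    by (simp add: norm_sq sum_distrib_left mult_ac)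
  also have "\<dots> = (\<Sum>w\<in>VB. cnj (F w) * (\<kappa> * (\<Sum>u | E w u. F u)))"
    by (intro sum.cong) (simp_all add: eqB)
  also have "\<dots> = \<kappa> * (\<Sum>w\<in>VB. \<Sum>u | E w u. F u * cnj (F w))"
    by (simp add: sum_distrib_left sum_distrib_right mult_ac)
  finally show "(\<mu> + of_nat \<delta>B) * of_real (\<Sum>w\<in>VB. (cmod (F w))\<^sup>2) =
      \<kappa> * cnj (\<Sum>u\<in>VR. \<Sum>w | E u w. cnj (F u) * F w)"
    by (simp add: sum_edges_swap)
qed

text \<open>With \<open>a, b\<close> the squared norms of \<open>F\<close> on the two colour classes and \<open>X\<close> the
  adjacency form, multiplying the two pairings and bounding \<open>\<bar>X\<bar>\<^sup>2\<close> by Cauchy-Schwarz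
  yields \<open>s = \<bar>X\<bar>\<^sup>2 / (a b)\<close>; if \<open>a b = 0\<close> then \<open>X = 0\<close>, and \<open>s = 0\<close> works.\<close>
lemma vertex_eigen_relation:
  fixes F :: "'a \<Rightarrow> complex"
  assumes "\<exists>v\<in>V. F v \<noteq> 0"
    and eqR: "\<And>u. u \<in> VR \<Longrightarrow> (\<kappa>\<^sup>2 + of_nat \<delta>R) * F u = \<kappa> * (\<Sum>w | E u w. F w)"
    and eqB: "\<And>u. u \<in> VB \<Longrightarrow> (\<kappa>\<^sup>2 + of_nat \<delta>B) * F u = \<kappa> * (\<Sum>w | E u w. F w)"
  shows "\<exists>s. 0 \<le> s \<and> s \<le> (real \<delta>R + 1) * (real \<delta>B + 1) \<and>
    (\<kappa>\<^sup>2 + of_nat \<delta>R) * (\<kappa>\<^sup>2 + of_nat \<delta>B) = \<kappa>\<^sup>2 * of_real s"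
proof -
  define a where "a = (\<Sum>u\<in>VR. (cmod (F u))\<^sup>2)"
  define b where "b = (\<Sum>w\<in>VB. (cmod (F w))\<^sup>2)"
  define X where "X = (\<Sum>u\<in>VR. \<Sum>w | E u w. cnj (F u) * F w)"
  have eq_a: "(\<kappa>\<^sup>2 + of_nat \<delta>R) * of_real a = \<kappa> * X"
    unfolding a_def X_def by (rule colour_class_pairing(1)[OF eqR eqB])
  have eq_b: "(\<kappa>\<^sup>2 + of_nat \<delta>B) * of_real b = \<kappa> * cnj X"
    unfolding b_def X_def by (rule colour_class_pairing(2)[OF eqR eqB])
  have bound: "(cmod X)\<^sup>2 \<le> (real \<delta>R + 1) * (real \<delta>B + 1) * a * b"
    unfolding X_def a_def b_def by (rule adjacency_form_bound)
  have "a \<ge> 0" "b \<ge> 0"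
    by (simp_all add: a_def b_def sum_nonneg)
  moreover have "a \<noteq> 0 \<or> b \<noteq> 0"
  proof -
    obtain v where "v \<in> V" "F v \<noteq> 0"
      using assms(1) by blast
    then have "v \<in> VR \<and> (cmod (F v))\<^sup>2 \<noteq> 0 \<or> v \<in> VB \<and> (cmod (F v))\<^sup>2 \<noteq> 0"
      using V_eq by auto
    then show ?thesis
      unfolding a_def b_def using finite_VR finite_VB
      by (metis (no_types, lifting) sum_nonneg_eq_0_iff zero_le_power2)
  qed
  ultimately consider "a > 0" "b > 0" | "a = 0" "b > 0" | "a > 0" "b = 0"
    by fastforce
  then show ?thesis
  proof cases
    case 1
    have "(\<kappa>\<^sup>2 + of_nat \<delta>R) * (\<kappa>\<^sup>2 + of_nat \<delta>B) * of_real (a * b) =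
        ((\<kappa>\<^sup>2 + of_nat \<delta>R) * of_real a) * ((\<kappa>\<^sup>2 + of_nat \<delta>B) * of_real b)"
      by (simp add: mult_ac)
    also have "\<dots> = \<kappa>\<^sup>2 * of_real ((cmod X)\<^sup>2)"
      unfolding eq_a eq_b complex_norm_square by (simp add: power2_eq_square mult_ac)
    finally have "(\<kappa>\<^sup>2 + of_nat \<delta>R) * (\<kappa>\<^sup>2 + of_nat \<delta>B) = \<kappa>\<^sup>2 * of_real ((cmod X)\<^sup>2 / (a * b))"
      using 1 by (simp add: field_simps del: of_real_power)
    moreover have "(cmod X)\<^sup>2 / (a * b) \<le> (real \<delta>R + 1) * (real \<delta>B + 1)"
      using 1 bound by (simp add: divide_le_eq mult.assoc)
    ultimately show ?thesis
      using 1 by (intro exI[of _ "(cmod X)\<^sup>2 / (a * b)"]) simp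
  next
    case 2
    with bound have "X = 0" by simp
    with eq_b 2 have "\<kappa>\<^sup>2 + of_nat \<delta>B = 0" by simp
    then show ?thesis by (intro exI[of _ 0]) simp
  next
    case 3
    with bound have "X = 0" by simp
    with eq_a 3 have "\<kappa>\<^sup>2 + of_nat \<delta>R = 0" by simp
    then show ?thesis by (intro exI[of _ 0]) simp
  qed
qed

lemma nb_eigenvalue_location:
  assumes "nb_eigenvalue E \<kappa>" and "\<kappa> \<noteq> 0"
  shows "cmod (\<kappa>\<^sup>2) = sqrt (real \<delta>R * real \<delta>B) \<or>
    (\<kappa>\<^sup>2 \<in> \<real> \<and> 1 \<le> cmod (\<kappa>\<^sup>2) \<and> cmod (\<kappa>\<^sup>2) \<le> real \<delta>R * real \<delta>B)"
proof -
  have one_le: "1 \<le> real \<delta>R" "1 \<le> real \<delta>B"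
    using one_le_\<delta>R one_le_\<delta>B by simp_all
  then have "1 \<le> real \<delta>R * real \<delta>B"
    by (metis mult_mono' mult_1 zero_le_one)
  show ?thesis
  proof (cases "\<kappa>\<^sup>2 = 1")
    case True
    with \<open>1 \<le> real \<delta>R * real \<delta>B\<close> show ?thesis by simp
  next
    case False
    from assms(1) obtain f u w where "E u w" "f (u, w) \<noteq> 0"
      and eigen: "\<And>u w. E u w \<Longrightarrow> \<kappa> * f (u, w) = (\<Sum>x\<in>{x. E w x} - {u}. f (w, x))"
      unfolding nb_eigenvalue_def by blast
    note vertex_eq = nb_eigenfunction_vertex_equation[OF edge_sym finite_neighbours eigen]
    have "\<kappa> * out_sum E f w - out_sum E f u \<noteq> 0"
      using nb_eigenfunction_dart_equation[OF edge_sym finite_neighbours eigen \<open>E u w\<close>]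
        \<open>f (u, w) \<noteq> 0\<close> False by auto
    then have "\<exists>v\<in>V. out_sum E f v \<noteq> 0"
      using edge_V[OF \<open>E u w\<close>] by (cases "out_sum E f w = 0") auto
    moreover have "(\<kappa>\<^sup>2 + of_nat \<delta>R) * out_sum E f v = \<kappa> * (\<Sum>w | E v w. out_sum E f w)"
      if "v \<in> VR" for v
      using vertex_eq[of v] by (simp add: degree_R[OF that] algebra_simps)
    moreover have "(\<kappa>\<^sup>2 + of_nat \<delta>B) * out_sum E f v = \<kappa> * (\<Sum>w | E v w. out_sum E f w)"
      if "v \<in> VB" for v
      using vertex_eq[of v] by (simp add: degree_B[OF that] algebra_simps)
    ultimately obtain s where s: "0 \<le> s" "s \<le> (real \<delta>R + 1) * (real \<delta>B + 1)"
      and eq: "(\<kappa>\<^sup>2 + of_nat \<delta>R) * (\<kappa>\<^sup>2 + of_nat \<delta>B) = \<kappa>\<^sup>2 * of_real s"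
      using vertex_eigen_relation by blast
    show ?thesis
      using complex_quadratic_root_location[OF one_le _ _ s] eq \<open>\<kappa> \<noteq> 0\<close> by simp
  qed
qed

lemma nb_eigenvalue_reciprocal_square_outside_regions:
  assumes "nb_eigenvalue E \<kappa>" and "\<kappa>\<^sup>2 * z = 1"
  shows "z \<notin> region_inner \<delta>R \<delta>B \<union> region_outer \<delta>R \<delta>B"
proof -
  from assms(2) have "\<kappa> \<noteq> 0"
    by auto
  with assms(2) have "z = 1 / \<kappa>\<^sup>2"
    by (simp add: nonzero_eq_divide_eq mult.commute)
  then show ?thesis
    using inverse_not_in_regions[OF one_le_\<delta>R one_le_\<delta>B nb_eigenvalue_location[OF assms(1) \<open>\<kappa> \<noteq> 0\<close>]]
    by simp
qed

end

section \<open>The rational extension\<close>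

lemma sums_partial_fractions:
  fixes cs :: "complex list"
  assumes "\<forall>c\<in>set cs. cmod (c * z) < 1"
  shows "(\<lambda>m. \<Sum>c\<leftarrow>cs. (c * z) ^ Suc m) sums (\<Sum>c\<leftarrow>cs. c * z / (1 - c * z))"
  using assms
proof (induction cs)
  case Nil
  then show ?case by simp
next
  case (Cons c cs)
  have "(\<lambda>m. (c * z) ^ Suc m) sums (c * z / (1 - c * z))"
    using sums_mult[OF geometric_sums[of "c * z"], of "c * z"] Cons.prems by simp
  then show ?case
    using sums_add[OF _ Cons.IH] Cons.prems by simp
qed

lemma partial_fraction_series_near_0:
  fixes cs :: "complex list"
  shows "\<exists>\<epsilon>>0. \<forall>z\<in>ball 0 \<epsilon>. (\<lambda>m. \<Sum>c\<leftarrow>cs. (c * z) ^ Suc m) sums (\<Sum>c\<leftarrow>cs. c * z / (1 - c * z))"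
proof -
  have "\<forall>\<^sub>F z in nhds 0. \<forall>c\<in>set cs. cmod (c * z) < 1"
  proof (rule eventually_ball_finite[OF finite_set], rule ballI)
    fix c :: complex
    have "((\<lambda>z. cmod (c * z)) \<longlongrightarrow> cmod (c * 0)) (nhds 0)"
      by (intro tendsto_intros filterlim_ident)
    then show "\<forall>\<^sub>F z in nhds 0. cmod (c * z) < 1"
      by (rule order_tendstoD(2)) simp
  qed
  then obtain \<epsilon> where "\<epsilon> > 0" "\<And>z. dist z 0 < \<epsilon> \<Longrightarrow> \<forall>c\<in>set cs. cmod (c * z) < 1"
    unfolding eventually_nhds_metric by blast
  then show ?thesis
    using sums_partial_fractions by (auto simp: dist_commute)
qed

lemma holomorphic_partial_fractions:
  fixes cs :: "complex list"
  shows "(\<lambda>z. \<Sum>c\<leftarrow>cs. c * z / (1 - c * z)) holomorphic_on {z. \<forall>c\<in>set cs. c * z \<noteq> 1}"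
proof (induction cs)
  case Nil
  then show ?case by simp
next
  case (Cons c cs)
  have "(\<lambda>z. c * z / (1 - c * z)) holomorphic_on {z. \<forall>c\<in>set (c # cs). c * z \<noteq> 1}"
    by (intro holomorphic_intros) auto
  moreover have "(\<lambda>z. \<Sum>c\<leftarrow>cs. c * z / (1 - c * z)) holomorphic_on {z. \<forall>c\<in>set (c # cs). c * z \<noteq> 1}"
    by (rule holomorphic_on_subset[OF Cons.IH]) auto
  ultimately show ?case
    by (simp add: holomorphic_on_add)
qed

lemma open_connected_avoiding_reciprocals:
  fixes cs :: "complex list"
  shows "open {z. \<forall>c\<in>set cs. c * z \<noteq> 1}" and "connected {z. \<forall>c\<in>set cs. c * z \<noteq> 1}"
proof -
  have "z \<in> (\<lambda>c. 1 / c) ` set cs" if "c \<in> set cs" "c * z = 1" for z c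
  proof -
    from that(2) have "c \<noteq> 0" by auto
    with that(2) have "z = 1 / c"
      by (simp add: nonzero_eq_divide_eq mult.commute)
    with that(1) show ?thesis by blast
  qed
  then have "{z. \<exists>c\<in>set cs. c * z = 1} \<subseteq> (\<lambda>c. 1 / c) ` set cs"
    by blast
  then have fin: "finite {z. \<exists>c\<in>set cs. c * z = 1}"
    by (rule finite_subset) simp
  have eq: "{z. \<forall>c\<in>set cs. c * z \<noteq> 1} = UNIV - {z. \<exists>c\<in>set cs. c * z = 1}"
    by auto
  show "open {z. \<forall>c\<in>set cs. c * z \<noteq> 1}"
    unfolding eq using fin by (simp add: open_Diff finite_imp_closed)
  show "connected {z. \<forall>c\<in>set cs. c * z \<noteq> 1}"
    unfolding eq using fin by (intro connected_open_diff_countable) (auto simp: countable_finite)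
qed

lemma partial_fractions_eq_P_G_near_0:
  assumes eta: "\<And>l. 1 \<le> l \<Longrightarrow> of_nat (eta E l) = (\<Sum>a\<leftarrow>as. a ^ l)"
  shows "\<exists>\<epsilon>>0. \<forall>z\<in>ball 0 \<epsilon>.
    of_nat (num_edges E) + (\<Sum>c\<leftarrow>map (\<lambda>a. a\<^sup>2) as. c * z / (1 - c * z)) = P_G E z"
proof -
  define cs where "cs = map (\<lambda>a. a\<^sup>2) as"
  have series: "of_nat (eta E (2 * Suc m)) * z ^ Suc m = (\<Sum>c\<leftarrow>cs. (c * z) ^ Suc m)" for m z
  proof -
    have "of_nat (eta E (2 * Suc m)) = (\<Sum>a\<leftarrow>as. a ^ (2 * Suc m))"
      by (rule eta) simp
    also have "\<dots> = (\<Sum>c\<leftarrow>cs. c ^ Suc m)"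
      by (simp only: cs_def map_map o_def power_mult)
    finally show ?thesis
      by (simp only: power_mult_distrib sum_list_mult_const)
  qed
  obtain \<epsilon> where "\<epsilon> > 0"
    and sums: "\<And>z. z \<in> ball 0 \<epsilon> \<Longrightarrow>
      (\<lambda>m. \<Sum>c\<leftarrow>cs. (c * z) ^ Suc m) sums (\<Sum>c\<leftarrow>cs. c * z / (1 - c * z))"
    using partial_fraction_series_near_0 by blast
  have "of_nat (num_edges E) + (\<Sum>c\<leftarrow>cs. c * z / (1 - c * z)) = P_G E z" if "z \<in> ball 0 \<epsilon>" for z
    unfolding P_G_def series sums_unique[OF sums[OF that]] ..
  with \<open>\<epsilon> > 0\<close> show ?thesis
    unfolding cs_def by blast
qed

theorem theorem5p4:
  fixes V VR VB :: "'a set" and E :: "'a \<Rightarrow> 'a \<Rightarrow> bool" and \<delta>R \<delta>B :: nat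
  assumes "biregular_graph V VR VB E \<delta>R \<delta>B"
  shows "\<exists>S h. open S \<and> connected S \<and>
           region_inner \<delta>R \<delta>B \<union> (region_outer \<delta>R \<delta>B - {\<i>, - \<i>}) \<subseteq> S \<and>
           h holomorphic_on S \<and>
           (\<exists>\<epsilon>>0. \<forall>z\<in>ball 0 \<epsilon>. h z = P_G E z) \<and>
           not_essential h \<i> \<and> not_essential h (- \<i>)"
proof -
  interpret biregular V VR VB E \<delta>R \<delta>B
    by (rule biregular.intro) (fact assms)
  obtain as where eigen: "\<forall>a\<in>set as. nb_eigenvalue E a"
    and eta: "\<And>l. 1 \<le> l \<Longrightarrow> of_nat (eta E l) = (\<Sum>a\<leftarrow>as. a ^ l)"
    using eta_eq_sum_nb_eigenvalue_powers[OF finite_darts] by blast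
  define cs where "cs = map (\<lambda>a. a\<^sup>2) as"
  define S where "S = {z. \<forall>c\<in>set cs. c * z \<noteq> 1}"
  define h where "h z = of_nat (num_edges E) + (\<Sum>c\<leftarrow>cs. c * z / (1 - c * z))" for z
  have "region_inner \<delta>R \<delta>B \<union> region_outer \<delta>R \<delta>B \<subseteq> S"
    using eigen nb_eigenvalue_reciprocal_square_outside_regions by (auto simp: S_def cs_def)
  moreover have "h holomorphic_on S"
    unfolding h_def S_def by (intro holomorphic_intros holomorphic_partial_fractions)
  moreover have "\<exists>\<epsilon>>0. \<forall>z\<in>ball 0 \<epsilon>. h z = P_G E z"
    using partial_fractions_eq_P_G_near_0[OF eta] by (simp add: h_def cs_def)
  moreover have "not_essential h z" for z
    unfolding h_def by (intro meromorphic_on_not_essential meromorphic_intros)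
  ultimately show ?thesis
    unfolding S_def using open_connected_avoiding_reciprocals by blast
qed

end
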